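(* Let $(m_i)_{i\ge0}$ and $(M_i)_{i\ge0}$ be sequences of positive integers such that $\rho_{m_i-1}\cdots\rho_1\cdot p^{M_i}\le1$ for all $i\ge0$ (the empty product being $1$). Suppose that for some $\lambda_0\in\Lambda$ there is $z_0\in K(Q_{\lambda_0},B)$ whose itinerary for $Q_{\lambda_0}$ is $$\underbrace{0\ldots0}_{m_0}\underbrace{1\ldots1}_{M_0}\underbrace{0\ldots0}_{m_1}\underbrace{1\ldots1}_{M_1}\ldots\underbrace{0\ldots0}_{m_i}\underbrace{1\ldots1}_{M_i}\ldots.$$ Then the closed ball $D=\{z:|z-z_0|\le S\}$ is contained in $K(Q_{\lambda_0},B)$. If moreover $\lim_{i\to\infty}M_i=\infty$, then $D$ is a wandering disc for $Q_{\lambda_0}$ contained in $K(Q_{\lambda_0},B)$ which is not attracted to an attracting cycle.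
   Context: Let $p$ be a prime, $\mathbb C_p$ with $p$-adic absolute value, $|p|=1/p$. $\Lambda=\{\lambda\in\mathbb C_p:|\lambda-1|<1\}$, $P_\lambda(z)=\frac{\lambda}{p}z^p+\left(1-\frac{\lambda}{p}\right)z^{p+1}$, $\rho=p^{-1/(p-1)}$; $S>0$ is defined by $pS^{p-1}=\rho$; $\rho_0=1$ and $p\rho_n^p=\rho_{n-1}$ for $n\ge1$. Fix $\hat r\in|\mathbb C_p^*|$, $\hat r>1$, $B=\{z:|z|\le\hat r\}$; $\mathcal H(B)$ is the ring of power series $\sum a_iz^i$ convergent on $B$ with norm $\|f\|_B=\sup_i|a_i|\hat r^{\,i}$. Fix $Q\in\mathcal H(B)$ with $\|Q\|_B<\rho$, $Q^*_\lambda=P_\lambda+Q$, and let $h(\lambda)$ be the unique fixed point of $Q^*_\lambda$ in $\{z:|z-1|\le|Q(1)|/p\}$. Define $Q_\lambda(z)=P_\lambda(z+h(\lambda)-1)+Q(z+h(\lambda)-1)+1-h(\lambda)$ for $z\in B$, and $K(Q_\lambda,B)=\{z\in B:Q_\lambda^n(z)\in B\ \forall n\ge0\}$. With $B_0=\{z:|z|<1\}$, $B_1=\{z:|z-1|<1\}$ (one has $K(Q_\lambda,B)\subset B_0\sqcup B_1$), the itinerary of $z\in K(Q_\lambda,B)$ is $\theta_0\theta_1\ldots$ with $Q_\lambda^n(z)\in B_{\theta_n}$. A wandering disc is a ball $D$ with $Q^n_\lambda(D)\cap Q^m_\lambda(D)\ne\emptyset$ only if $n=m$; "not attracted to an attracting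 cycle" means no point of $D$ lies in an open ball contained in the basin of an attracting periodic orbit. *)

theory Defs
  imports "HOL-Computational_Algebra.Computational_Algebra"
begin

definition nonarch_abs :: "('a::field_char_0 \<Rightarrow> real) \<Rightarrow> bool" where
  "nonarch_abs av \<longleftrightarrow> (\<forall>x. av x \<ge> 0) \<and> (\<forall>x. av x = 0 \<longleftrightarrow> x = 0)
     \<and> (\<forall>x y. av (x * y) = av x * av y) \<and> (\<forall>x y. av (x + y) \<le> max (av x) (av y))"

definition v_lim :: "('a::field_char_0 \<Rightarrow> real) \<Rightarrow> (nat \<Rightarrow> 'a) \<Rightarrow> 'a \<Rightarrow> bool" where
  "v_lim av X L \<longleftrightarrow> (\<lambda>n. av (X n - L)) \<longlonglongrightarrow> 0"

definition v_cauchy :: "('a::field_char_0 \<Rightarrow> real) \<Rightarrow> (nat \<Rightarrow> 'a) \<Rightarrow> bool" where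
  "v_cauchy av X \<longleftrightarrow> (\<forall>e>0. \<exists>N. \<forall>m\<ge>N. \<forall>n\<ge>N. av (X m - X n) < e)"

text \<open>(F, av) is (isometrically isomorphic to) C_p: a complete, algebraically closed
  non-archimedean valued field of characteristic 0 with |p| = 1/p in which the
  algebraic numbers are dense (i.e. F is the completion of an algebraic closure of Q_p).\<close>
definition is_Cp :: "('a::field_char_0 \<Rightarrow> real) \<Rightarrow> nat \<Rightarrow> bool" where
  "is_Cp av p \<longleftrightarrow> prime p \<and> nonarch_abs av \<and> av (of_nat p) = 1 / real p
     \<and> (\<forall>X. v_cauchy av X \<longrightarrow> (\<exists>L. v_lim av X L))
     \<and> (\<forall>q :: 'a poly. degree q > 0 \<longrightarrow> (\<exists>z. poly q z = 0))
     \<and> (\<forall>x e. e > 0 \<longrightarrow> (\<exists>y. algebraic y \<and> av (x - y) < e))"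

section \<open>Power series on the closed ball B of radius rhat\<close>

definition in_HB :: "('a::field_char_0 \<Rightarrow> real) \<Rightarrow> real \<Rightarrow> (nat \<Rightarrow> 'a) \<Rightarrow> bool" where
  "in_HB av rhat a \<longleftrightarrow> (\<lambda>i. av (a i) * rhat ^ i) \<longlonglongrightarrow> 0"

definition ps_norm :: "('a::field_char_0 \<Rightarrow> real) \<Rightarrow> real \<Rightarrow> (nat \<Rightarrow> 'a) \<Rightarrow> real" where
  "ps_norm av rhat a = (SUP i. av (a i) * rhat ^ i)"

definition ps_eval :: "('a::field_char_0 \<Rightarrow> real) \<Rightarrow> (nat \<Rightarrow> 'a) \<Rightarrow> 'a \<Rightarrow> 'a" where
  "ps_eval av a z = (THE s. v_lim av (\<lambda>n. \<Sum>i<n. a i * z ^ i) s)"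

definition P_lam :: "nat \<Rightarrow> 'a::field_char_0 \<Rightarrow> 'a \<Rightarrow> 'a" where
  "P_lam p l z = l / of_nat p * z ^ p + (1 - l / of_nat p) * z ^ (p + 1)"

definition h_fix :: "('a::field_char_0 \<Rightarrow> real) \<Rightarrow> nat \<Rightarrow> (nat \<Rightarrow> 'a) \<Rightarrow> 'a \<Rightarrow> 'a" where
  "h_fix av p a l = (THE z. av (z - 1) \<le> av (ps_eval av a 1) / real p
                        \<and> P_lam p l z + ps_eval av a z = z)"

definition Q_lam :: "('a::field_char_0 \<Rightarrow> real) \<Rightarrow> nat \<Rightarrow> (nat \<Rightarrow> 'a) \<Rightarrow> 'a \<Rightarrow> 'a \<Rightarrow> 'a" where
  "Q_lam av p a l z = (let h = h_fix av p a l in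
      P_lam p l (z + h - 1) + ps_eval av a (z + h - 1) + 1 - h)"

definition K_set :: "('a::field_char_0 \<Rightarrow> real) \<Rightarrow> real \<Rightarrow> ('a \<Rightarrow> 'a) \<Rightarrow> 'a set" where
  "K_set av rhat f = {z. \<forall>n. av ((f ^^ n) z) \<le> rhat}"

definition rho :: "nat \<Rightarrow> real" where
  "rho p = real p powr (- 1 / (real p - 1))"

definition S_rad :: "nat \<Rightarrow> real" where
  "S_rad p = (rho p / real p) powr (1 / (real p - 1))"

primrec rho_seq :: "nat \<Rightarrow> nat \<Rightarrow> real" where
  "rho_seq p 0 = 1"
| "rho_seq p (Suc n) = root p (rho_seq p n / real p)"

primrec blk_start :: "(nat \<Rightarrow> nat) \<Rightarrow> (nat \<Rightarrow> nat) \<Rightarrow> nat \<Rightarrow> nat" where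
  "blk_start m M 0 = 0"
| "blk_start m M (Suc i) = blk_start m M i + m i + M i"

text \<open>The sequence 0^{m_0} 1^{M_0} 0^{m_1} 1^{M_1} ...\<close>
definition itin :: "(nat \<Rightarrow> nat) \<Rightarrow> (nat \<Rightarrow> nat) \<Rightarrow> nat \<Rightarrow> nat" where
  "itin m M n = (if \<exists>i. blk_start m M i \<le> n \<and> n < blk_start m M i + m i then 0 else 1)"

definition wandering_disc :: "('a \<Rightarrow> 'a) \<Rightarrow> 'a set \<Rightarrow> bool" where
  "wandering_disc f D \<longleftrightarrow> (\<forall>n k. (f ^^ n) ` D \<inter> (f ^^ k) ` D \<noteq> {} \<longrightarrow> n = k)"

definition has_vderiv :: "('a::field_char_0 \<Rightarrow> real) \<Rightarrow> ('a \<Rightarrow> 'a) \<Rightarrow> 'a \<Rightarrow> 'a \<Rightarrow> bool" where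
  "has_vderiv av f w d \<longleftrightarrow> (\<forall>e>0. \<exists>\<delta>>0. \<forall>z. 0 < av (z - w) \<and> av (z - w) < \<delta> \<longrightarrow>
       av ((f z - f w) / (z - w) - d) < e)"

definition attracting_cycle :: "('a::field_char_0 \<Rightarrow> real) \<Rightarrow> ('a \<Rightarrow> 'a) \<Rightarrow> 'a \<Rightarrow> nat \<Rightarrow> bool" where
  "attracting_cycle av f w k \<longleftrightarrow> k > 0 \<and> (f ^^ k) w = w
      \<and> (\<exists>d. has_vderiv av (f ^^ k) w d \<and> av d < 1)"

definition basin :: "('a::field_char_0 \<Rightarrow> real) \<Rightarrow> ('a \<Rightarrow> 'a) \<Rightarrow> 'a \<Rightarrow> nat \<Rightarrow> 'a set" where
  "basin av f w k = {z. \<exists>j<k. v_lim av (\<lambda>n. (f ^^ (n * k)) z) ((f ^^ j) w)}"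

definition not_attracted :: "('a::field_char_0 \<Rightarrow> real) \<Rightarrow> real \<Rightarrow> ('a \<Rightarrow> 'a) \<Rightarrow> 'a set \<Rightarrow> bool" where
  "not_attracted av rhat f D \<longleftrightarrow> \<not> (\<exists>z\<in>D. \<exists>c r w k. r > 0 \<and> av (z - c) < r
      \<and> w \<in> K_set av rhat f \<and> attracting_cycle av f w k
      \<and> {y. av (y - c) < r} \<subseteq> basin av f w k)"

end

theory Submission
  imports Defs
begin

text \<open>
  The conjugated map \<open>f = Q_lam av p a \<lambda>\<close> is \<open>p\<close>-Lipschitz on the unit ball, and near 0 it
  is dominated by the term \<open>(\<lambda>/p) z\<^sup>p\<close>: if \<open>|f x| \<le> \<rho>\<^sub>j\<close> then \<open>|x| \<le> \<rho>\<^sub>j\<^sub>+\<^sub>1\<close>, and on the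
  ball of radius \<open>\<rho>\<^sub>j\<^sub>+\<^sub>1\<close> the map shrinks distances up to \<open>S\<close> by the factor \<open>\<rho>\<^sub>j\<close>.
  Pulling back from the end of a block of zeros of length \<open>m\<close>, the orbit of \<open>z\<^sub>0\<close> lies in
  these balls, so across the block the distance to a nearby orbit shrinks by the product
  of \<open>\<rho>\<^sub>1, \<dots>, \<rho>\<^sub>m\<^sub>-\<^sub>1\<close>, while across the following block of ones of length \<open>M\<close> it grows
  by at most \<open>p\<^sup>M\<close>. The product hypothesis makes each pair of blocks non-expanding, so every
  orbit starting in \<open>D\<close> stays within \<open>S\<close> of the orbit of \<open>z\<^sub>0\<close>, hence in the unit ball.
  Points at distance less than 1 carry the same itinerary symbol; so two orbits from \<open>D\<close>
  that meet, or an orbit attracted to a cycle, would make the itinerary eventually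
  periodic, which unbounded blocks of ones rule out.
\<close>

section \<open>Non-archimedean absolute values\<close>

locale nonarch_field =
  fixes av :: "'a::field_char_0 \<Rightarrow> real"
  assumes nonarch_abs: "nonarch_abs av"
begin

lemma av_nonneg [simp]: "0 \<le> av x"
  using nonarch_abs unfolding nonarch_abs_def by blast

lemma av_eq_0_iff [simp]: "av x = 0 \<longleftrightarrow> x = 0"
  using nonarch_abs unfolding nonarch_abs_def by blast

lemma av_mult [simp]: "av (x * y) = av x * av y"
  using nonarch_abs unfolding nonarch_abs_def by blast

lemma av_0 [simp]: "av 0 = 0"
  by simp

lemma av_add_le_max: "av (x + y) \<le> max (av x) (av y)"
  using nonarch_abs unfolding nonarch_abs_def by blast

lemma av_add_le: "av x \<le> B \<Longrightarrow> av y \<le> B \<Longrightarrow> av (x + y) \<le> B"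
  using av_add_le_max[of x y] by simp

lemma av_1 [simp]: "av 1 = 1"
proof -
  have "av 1 * av 1 = av 1 * 1"
    using av_mult[of 1 1] by simp
  then show ?thesis by simp
qed

lemma av_minus [simp]: "av (- x) = av x"
proof -
  have "(av (-1) - 1) * (av (-1) + 1) = 0"
    using av_mult[of "-1" "-1"] by (simp add: algebra_simps)
  moreover have "av (-1) + 1 > 0"
    using av_nonneg[of "-1"] by linarith
  ultimately have "av (-1) = 1" by simp
  then show ?thesis using av_mult[of "-1" x] by simp
qed

lemma av_minus_commute: "av (x - y) = av (y - x)"
  by (metis av_minus minus_diff_eq)

lemma av_diff_le_max: "av (x - y) \<le> max (av x) (av y)"
  using av_add_le_max[of x "- y"] by simp

lemma av_diff_triangle: "av (x - z) \<le> max (av (x - y)) (av (y - z))"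
  using av_add_le_max[of "x - y" "y - z"] by simp

lemma av_diff_le: "av x \<le> B \<Longrightarrow> av y \<le> B \<Longrightarrow> av (x - y) \<le> B"
  unfolding diff_conv_add_uminus by (rule av_add_le) simp_all

lemma av_power [simp]: "av (x ^ n) = av x ^ n"
  by (induction n) auto

lemma av_inverse [simp]: "av (inverse x) = inverse (av x)"
proof (cases "x = 0")
  case False
  then have "av x * av (inverse x) = 1"
    using av_mult[of x "inverse x"] by simp
  then show ?thesis by (metis inverse_unique mult.commute)
qed simp

lemma av_divide [simp]: "av (x / y) = av x / av y"
  by (simp add: divide_inverse)

lemma av_of_nat_le_1: "av (of_nat n) \<le> 1"
proof (induction n)
  case (Suc n)
  then show ?case
    using av_add_le_max[of 1 "of_nat n"] by simp
qed simp

lemma av_add_eq_left: "av y < av x \<Longrightarrow> av (x + y) = av x"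
  using av_add_le_max[of x y] av_add_le_max[of "x + y" "- y"] by simp

lemma av_diff_eq_left: "av y < av x \<Longrightarrow> av (x - y) = av x"
  using av_add_eq_left[of "- y" x] by simp

lemma av_sum_le: "(\<And>i. i \<in> A \<Longrightarrow> av (f i) \<le> B) \<Longrightarrow> 0 \<le> B \<Longrightarrow> av (sum f A) \<le> B"
proof (induction A rule: infinite_finite_induct)
  case (insert x F)
  have "av (f x + sum f F) \<le> max (av (f x)) (av (sum f F))"
    by (rule av_add_le_max)
  also have "\<dots> \<le> B"
    using insert by simp
  finally show ?case
    using insert.hyps by simp
qed auto

lemma av_power_diff_le:
  assumes "av z \<le> R" "av z' \<le> R"
  shows "av (z ^ Suc n - z' ^ Suc n) \<le> av (z - z') * R ^ n"
proof -
  have R: "0 \<le> R" using assms(1) av_nonneg order_trans by blast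
  have "av (z' ^ (Suc n - Suc i) * z ^ i) \<le> R ^ n" if "i < Suc n" for i
  proof -
    have "av (z' ^ (Suc n - Suc i) * z ^ i) \<le> R ^ (n - i) * R ^ i"
      using assms R by (simp add: mult_mono power_mono)
    also have "\<dots> = R ^ n"
      using that by (simp add: power_add[symmetric])
    finally show ?thesis .
  qed
  then have "av (\<Sum>i<Suc n. z' ^ (Suc n - Suc i) * z ^ i) \<le> R ^ n"
    using R by (intro av_sum_le) auto
  then show ?thesis
    unfolding power_diff_sumr2[of z] av_mult by (simp add: mult_left_mono)
qed

lemma av_sum_powers_diff_le:
  assumes "av u \<le> r" "av u' \<le> r" "r \<le> 1" "0 \<le> C"
    and "\<And>k. k \<in> A \<Longrightarrow> 2 \<le> k \<and> av (c k) \<le> C"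
  shows "av ((\<Sum>k\<in>A. c k * u ^ k) - (\<Sum>k\<in>A. c k * u' ^ k)) \<le> C * r * av (u - u')"
proof -
  have r: "0 \<le> r" using assms(1) av_nonneg order_trans by blast
  have "av (c k * u ^ k - c k * u' ^ k) \<le> C * r * av (u - u')" if k: "k \<in> A" for k
  proof -
    obtain j where j: "k = Suc j" "1 \<le> j" using assms(5)[OF k] by (cases k) auto
    have "av (c k * u ^ k - c k * u' ^ k) = av (c k) * av (u ^ Suc j - u' ^ Suc j)"
      by (simp add: j right_diff_distrib[symmetric])
    also have "\<dots> \<le> C * (av (u - u') * r ^ j)"
      using assms(4,5) k av_power_diff_le[OF assms(1,2)] by (intro mult_mono) auto
    also have "\<dots> \<le> C * (av (u - u') * r)"
      using assms(3,4) r j power_decreasing[of 1 j r] by (intro mult_left_mono) auto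
    finally show ?thesis by (simp add: algebra_simps)
  qed
  then show ?thesis
    using assms(4) r by (simp add: sum_subtractf[symmetric] av_sum_le)
qed

lemma av_power_add_diff_le:
  assumes terms: "\<And>k. 1 \<le> k \<Longrightarrow> k \<le> n \<Longrightarrow> av (of_nat (n choose k)) * av d ^ k * av w ^ (n - k) \<le> B"
    and B: "0 \<le> B"
  shows "av ((w + d) ^ n - w ^ n) \<le> B"
proof -
  have "(d + w) ^ n = (\<Sum>k\<in>insert 0 {1..n}. of_nat (n choose k) * d ^ k * w ^ (n - k))"
    unfolding binomial_ring by (intro sum.cong) auto
  then have "(w + d) ^ n - w ^ n = (\<Sum>k\<in>{1..n}. of_nat (n choose k) * d ^ k * w ^ (n - k))"
    by (simp add: add.commute)
  also have "av \<dots> \<le> B"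
    using terms B by (intro av_sum_le) auto
  finally show ?thesis .
qed

lemma v_lim_const: "v_lim av (\<lambda>n. c) c"
  unfolding v_lim_def by simp

lemma v_lim_av_diff_le:
  assumes X: "v_lim av X L" and Y: "v_lim av Y L'" and C: "\<And>n. av (X n - Y n) \<le> C"
  shows "av (L - L') \<le> C"
proof -
  have le: "av (L - L') \<le> C + (av (X n - L) + av (Y n - L'))" for n
    using av_diff_triangle[of L L' "X n"] av_diff_triangle[of "X n" L' "Y n"]
      av_minus_commute[of L "X n"] av_minus_commute[of "Y n" L'] C[of n]
      av_nonneg[of "X n - L"] av_nonneg[of "Y n - L'"] av_nonneg[of "X n - Y n"]
    unfolding le_max_iff_disj by (smt (verit))
  have "(\<lambda>n. C + (av (X n - L) + av (Y n - L'))) \<longlonglongrightarrow> C + (0 + 0)"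
    using X Y unfolding v_lim_def by (intro tendsto_add) auto
  then show ?thesis
    using le by (intro LIMSEQ_le_const) auto
qed

lemma v_lim_unique: "v_lim av X L \<Longrightarrow> v_lim av X L' \<Longrightarrow> L = L'"
  using v_lim_av_diff_le[of X L X L' 0] av_nonneg[of "L - L'"] by simp

lemma v_cauchy_if_steps_tendsto_0:
  assumes steps: "(\<lambda>n. av (X (Suc n) - X n)) \<longlonglongrightarrow> 0"
  shows "v_cauchy av X"
  unfolding v_cauchy_def
proof (intro allI impI)
  fix e :: real assume "e > 0"
  then obtain N where N: "\<And>n. N \<le> n \<Longrightarrow> av (X (Suc n) - X n) < e"
    using steps unfolding LIMSEQ_iff by fastforce
  have near: "av (X n - X N) < e" if "N \<le> n" for n
    using that
  proof (induction n rule: dec_induct)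
    case (step n)
    then show ?case
      using N[of n] av_diff_triangle[of "X (Suc n)" "X N" "X n"] by simp
  qed (use \<open>e > 0\<close> in simp)
  have "av (X m - X n) < e" if "N \<le> m" "N \<le> n" for m n
    using av_diff_triangle[of "X m" "X n" "X N"] near[OF that(1)] near[OF that(2)]
      av_minus_commute[of "X n" "X N"] by simp
  then show "\<exists>N. \<forall>m\<ge>N. \<forall>n\<ge>N. av (X m - X n) < e"
    by blast
qed

end

locale complete_nonarch_field = nonarch_field +
  assumes complete: "v_cauchy av X \<Longrightarrow> \<exists>L. v_lim av X L"
begin

lemma v_lim_if_steps_tendsto_0:
  assumes "(\<lambda>n. av (X (Suc n) - X n)) \<longlonglongrightarrow> 0"
  obtains L where "v_lim av X L"
  using complete[OF v_cauchy_if_steps_tendsto_0[OF assms]] by blast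

lemma contraction_has_fixpoint:
  assumes r: "0 \<le> r" and q: "0 \<le> q" "q < 1"
    and maps: "\<And>u. av u \<le> r \<Longrightarrow> av (G u) \<le> r"
    and contr: "\<And>u v. av u \<le> r \<Longrightarrow> av v \<le> r \<Longrightarrow> av (G u - G v) \<le> q * av (u - v)"
  obtains u where "av u \<le> r" "G u = u"
proof -
  define X where "X n = (G ^^ n) 0" for n
  have X_ball: "av (X n) \<le> r" for n
    unfolding X_def by (induction n) (auto simp: r maps)
  have X_step: "av (X (Suc n) - X n) \<le> q ^ n * r" for n
  proof (induction n)
    case 0
    then show ?case using X_ball[of 1] by (simp add: X_def)
  next
    case (Suc n)
    have "av (X (Suc (Suc n)) - X (Suc n)) \<le> q * av (X (Suc n) - X n)"
      using contr[OF X_ball[of "Suc n"] X_ball[of n]] by (simp add: X_def)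
    also have "\<dots> \<le> q * (q ^ n * r)"
      using Suc q by (intro mult_left_mono) auto
    finally show ?case by simp
  qed
  have geometric: "(\<lambda>n. q ^ n * r) \<longlonglongrightarrow> 0"
    using q by (intro tendsto_mult_left_zero LIMSEQ_power_zero) simp
  have "(\<lambda>n. av (X (Suc n) - X n)) \<longlonglongrightarrow> 0"
    by (rule tendsto_sandwich[of "\<lambda>n. 0" _ _ "\<lambda>n. q ^ n * r"]) (use X_step geometric in auto)
  then obtain L where L: "v_lim av X L"
    by (rule v_lim_if_steps_tendsto_0)
  have L_ball: "av L \<le> r"
    using v_lim_av_diff_le[OF L v_lim_const, of 0 r] X_ball by simp
  have "v_lim av (\<lambda>n. X (Suc n)) L"
    using L unfolding v_lim_def by (rule LIMSEQ_Suc)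
  moreover have "v_lim av (\<lambda>n. X (Suc n)) (G L)"
    unfolding v_lim_def
  proof (rule tendsto_sandwich[of "\<lambda>n. 0" _ _ "\<lambda>n. q * av (X n - L)"])
    show "\<forall>\<^sub>F n in sequentially. av (X (Suc n) - G L) \<le> q * av (X n - L)"
      using contr[OF X_ball L_ball] by (simp add: X_def)
    show "(\<lambda>n. q * av (X n - L)) \<longlonglongrightarrow> 0"
      using L tendsto_mult_right_zero unfolding v_lim_def by blast
  qed auto
  ultimately show ?thesis
    using that v_lim_unique L_ball by blast
qed

lemma contraction_unique_fixpoint:
  assumes r: "0 \<le> r" and q: "0 \<le> q" "q < 1"
    and maps: "\<And>u. av u \<le> r \<Longrightarrow> av (G u) \<le> r"
    and contr: "\<And>u v. av u \<le> r \<Longrightarrow> av v \<le> r \<Longrightarrow> av (G u - G v) \<le> q * av (u - v)"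
  shows "\<exists>!u. av u \<le> r \<and> G u = u"
proof -
  have "u = v" if "av u \<le> r" "G u = u" "av v \<le> r" "G v = v" for u v
  proof -
    have "(1 - q) * av (u - v) \<le> 0"
      using contr[of u v] that by (simp add: algebra_simps)
    then show "u = v"
      using q av_nonneg[of "u - v"] by (simp add: mult_le_0_iff)
  qed
  then show ?thesis
    using contraction_has_fixpoint[OF assms] by blast
qed

end

section \<open>Power series on a closed ball\<close>

locale power_series_ball = complete_nonarch_field +
  fixes rhat :: real and a :: "nat \<Rightarrow> 'a::field_char_0"
  assumes rhat_ge_1: "1 \<le> rhat" and coeffs_tendsto_0: "in_HB av rhat a"
begin

lemma coeff_le_ps_norm: "av (a i) * rhat ^ i \<le> ps_norm av rhat a"
proof -
  have "Bseq (\<lambda>i. av (a i) * rhat ^ i)"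
    using coeffs_tendsto_0 unfolding in_HB_def by (intro convergent_imp_Bseq convergentI)
  then have "bdd_above (range (\<lambda>i. av (a i) * rhat ^ i))"
    by (rule Bseq_bdd_above)
  then show ?thesis
    unfolding ps_norm_def by (rule cSUP_upper[rotated]) simp
qed

lemma ps_norm_nonneg: "0 \<le> ps_norm av rhat a"
  using coeff_le_ps_norm[of 0] av_nonneg[of "a 0"] by (simp del: av_nonneg)

lemma av_term_le: "av z \<le> rhat \<Longrightarrow> av (a i * z ^ i) \<le> av (a i) * rhat ^ i"
  by (simp add: mult_left_mono power_mono)

lemma ps_eval_v_lim:
  assumes z: "av z \<le> rhat"
  shows "v_lim av (\<lambda>n. \<Sum>i<n. a i * z ^ i) (ps_eval av a z)"
proof -
  have "(\<lambda>n. av (a n * z ^ n)) \<longlonglongrightarrow> 0"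
    by (rule tendsto_sandwich[of "\<lambda>n. 0" _ _ "\<lambda>n. av (a n) * rhat ^ n"])
      (use coeffs_tendsto_0 av_term_le[OF z] in \<open>auto simp: in_HB_def\<close>)
  then have "(\<lambda>n. av ((\<Sum>i<Suc n. a i * z ^ i) - (\<Sum>i<n. a i * z ^ i))) \<longlonglongrightarrow> 0"
    by simp
  then obtain L where L: "v_lim av (\<lambda>n. \<Sum>i<n. a i * z ^ i) L"
    by (rule v_lim_if_steps_tendsto_0)
  moreover have "ps_eval av a z = L"
    unfolding ps_eval_def using L v_lim_unique by blast
  ultimately show ?thesis by simp
qed

lemma ps_eval_av_le:
  assumes z: "av z \<le> rhat"
  shows "av (ps_eval av a z) \<le> ps_norm av rhat a"
proof -
  have "av (a i * z ^ i) \<le> ps_norm av rhat a" for i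
    using av_term_le[OF z, of i] coeff_le_ps_norm[of i] by linarith
  then have "av ((\<Sum>i<n. a i * z ^ i) - 0) \<le> ps_norm av rhat a" for n
    using ps_norm_nonneg by (simp add: av_sum_le)
  then show ?thesis
    using v_lim_av_diff_le[OF ps_eval_v_lim[OF z] v_lim_const, of 0] by simp
qed

lemma ps_eval_lipschitz:
  assumes z: "av z \<le> rhat" and z': "av z' \<le> rhat"
  shows "av (ps_eval av a z - ps_eval av a z') \<le> ps_norm av rhat a * av (z - z')"
proof -
  have "av (a i * z ^ i - a i * z' ^ i) \<le> ps_norm av rhat a * av (z - z')" for i
  proof (cases i)
    case (Suc j)
    have "av (a i * z ^ i - a i * z' ^ i) = av (a i) * av (z ^ Suc j - z' ^ Suc j)"
      by (simp add: Suc right_diff_distrib[symmetric])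
    also have "\<dots> \<le> av (a i) * (av (z - z') * rhat ^ j)"
      using av_power_diff_le[OF z z', of j] by (intro mult_left_mono) auto
    also have "\<dots> \<le> av (a i) * (av (z - z') * rhat ^ i)"
      using rhat_ge_1 Suc by (intro mult_left_mono power_increasing) auto
    also have "\<dots> = (av (a i) * rhat ^ i) * av (z - z')"
      by (simp add: algebra_simps)
    also have "\<dots> \<le> ps_norm av rhat a * av (z - z')"
      by (intro mult_right_mono coeff_le_ps_norm) simp
    finally show ?thesis .
  qed (simp add: ps_norm_nonneg)
  then have "av ((\<Sum>i<n. a i * z ^ i) - (\<Sum>i<n. a i * z' ^ i)) \<le> ps_norm av rhat a * av (z - z')"
    for n using ps_norm_nonneg by (simp add: sum_subtractf[symmetric] av_sum_le)
  then show ?thesis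
    by (rule v_lim_av_diff_le[OF ps_eval_v_lim[OF z] ps_eval_v_lim[OF z']])
qed

end

section \<open>The radii\<close>

declare rho_seq.simps(2) [simp del]

context
  fixes p :: nat
  assumes p: "2 \<le> p"
begin

lemma rho_pos: "0 < rho p"
  using p by (simp add: rho_def)

lemma rho_power: "rho p ^ (p - 1) = 1 / real p"
proof -
  have "rho p ^ (p - 1) = real p powr ((- 1 / (real p - 1)) * (real p - 1))"
    using p rho_pos by (simp add: rho_def powr_realpow[symmetric] powr_powr of_nat_diff)
  also have "\<dots> = 1 / real p"
    using p by (simp add: powr_minus_divide)
  finally show ?thesis .
qed

lemma rho_lt_1: "rho p < 1"
  using p unfolding rho_def by (intro powr_less_one) (auto simp: divide_neg_pos)

lemma inverse_p_le_rho: "1 / real p \<le> rho p"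
proof -
  have "rho p ^ (p - 1) \<le> rho p ^ 1"
    using rho_pos rho_lt_1 p by (intro power_decreasing) auto
  then show ?thesis
    unfolding rho_power by simp
qed

lemma S_rad_pos: "0 < S_rad p"
  using p rho_pos by (simp add: S_rad_def)

lemma S_rad_power: "real p * S_rad p ^ (p - 1) = rho p"
proof -
  have "S_rad p ^ (p - 1) = (rho p / real p) powr ((1 / (real p - 1)) * (real p - 1))"
    using p rho_pos S_rad_pos by (simp add: S_rad_def powr_realpow[symmetric] powr_powr of_nat_diff)
  also have "\<dots> = rho p / real p"
    using p rho_pos by simp
  finally show ?thesis using p by simp
qed

lemma S_rad_lt_rho: "S_rad p < rho p"
proof -
  have "S_rad p ^ (p - 1) = rho p / real p"
    using S_rad_power p by (simp add: field_simps)
  also have "\<dots> < 1 / real p"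
    using rho_lt_1 p by (simp add: divide_strict_right_mono)
  finally have "S_rad p ^ (p - 1) < rho p ^ (p - 1)"
    unfolding rho_power .
  then show ?thesis
    using power_less_imp_less_base rho_pos by fastforce
qed

lemma S_rad_lt_1: "S_rad p < 1"
  using S_rad_lt_rho rho_lt_1 by linarith

lemma rho_seq_bounds: "0 < rho_seq p k \<and> rho p \<le> rho_seq p k \<and> rho_seq p k \<le> 1"
proof (induction k)
  case 0
  then show ?case using rho_lt_1 by simp
next
  case (Suc k)
  have "rho p ^ p = rho p / real p"
    using p rho_power by (metis Suc_diff_1 mult.commute not_numeral_le_zero not_gr0 power_Suc times_divide_eq_right mult_1)
  then have "root p (rho p / real p) = rho p"
    using p rho_pos by (metis less_le not_numeral_le_zero not_gr0 real_root_power_cancel)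
  moreover have "root p (rho p / real p) \<le> rho_seq p (Suc k)"
    using Suc p by (simp add: rho_seq.simps(2) divide_right_mono)
  moreover have "rho_seq p (Suc k) \<le> root p 1"
    using Suc p by (simp add: rho_seq.simps(2) del: real_root_one)
  ultimately show ?case
    using Suc p by (simp add: rho_seq.simps(2))
qed

lemma rho_seq_Suc_power: "real p * rho_seq p (Suc k) ^ p = rho_seq p k"
  using rho_seq_bounds[of k] p by (simp add: rho_seq.simps(2) real_root_pow_pos2)

lemma rho_seq_Suc_power_le: "rho_seq p (Suc k) ^ (p - 1) \<le> rho_seq p k"
proof -
  have "1 \<le> real p * rho p"
    using inverse_p_le_rho p by (simp add: field_simps)
  also have "\<dots> \<le> real p * rho_seq p (Suc k)"
    using rho_seq_bounds[of "Suc k"] by (simp add: mult_left_mono)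
  finally have "1 \<le> real p * rho_seq p (Suc k)" .
  then have "rho_seq p (Suc k) ^ (p - 1) \<le> real p * rho_seq p (Suc k) * rho_seq p (Suc k) ^ (p - 1)"
    using rho_seq_bounds[of "Suc k"] by simp
  also have "\<dots> = rho_seq p k"
    using rho_seq_Suc_power[of k] p by (simp add: power_eq_if mult.assoc)
  finally show ?thesis .
qed

lemma power_le_S_rad_mult:
  assumes "0 \<le> x" "x \<le> S_rad p" "p \<le> k"
  shows "real p * x ^ k \<le> rho p * x"
proof -
  have "x ^ k \<le> x ^ p"
    using assms S_rad_lt_1 by (intro power_decreasing) auto
  also have "\<dots> = x * x ^ (p - 1)"
    using p by (simp add: power_eq_if)
  also have "\<dots> \<le> x * S_rad p ^ (p - 1)"
    using assms by (intro mult_left_mono power_mono) auto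
  finally have "real p * x ^ k \<le> real p * (x * S_rad p ^ (p - 1))"
    by (rule mult_left_mono) simp
  also have "\<dots> = x * (real p * S_rad p ^ (p - 1))"
    by (rule mult.left_commute)
  also have "\<dots> = rho p * x"
    unfolding S_rad_power by simp
  finally show ?thesis .
qed

end

lemma power_le_mult_of_le:
  fixes x s :: real
  assumes "0 \<le> x" "x \<le> s" "s \<le> 1" "2 \<le> k"
  shows "x ^ k \<le> s * x"
proof -
  have "x ^ k \<le> x ^ 2"
    using assms by (intro power_decreasing) auto
  also have "\<dots> \<le> s * x"
    using assms by (simp add: power2_eq_square mult_right_mono)
  finally show ?thesis .
qed

section \<open>The polynomial P\<close>

locale lambda_poly = nonarch_field +
  fixes p :: nat and l :: "'a::field_char_0"
  assumes prime_p: "prime p" and av_of_nat_p: "av (of_nat p) = 1 / real p"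
    and l_near_1: "av (l - 1) < 1"
begin

lemma p_ge_2: "2 \<le> p"
  using prime_p prime_ge_2_nat by blast

lemma av_l: "av l = 1"
  using av_add_eq_left[of "l - 1" 1] l_near_1 by simp

lemma av_l_div_p: "av (l / of_nat p) = real p"
  using av_l av_of_nat_p by simp

lemma av_one_minus_l_div_p: "av (1 - l / of_nat p) = real p"
  using av_diff_eq_left[of 1 "l / of_nat p"] av_l_div_p p_ge_2 av_minus_commute by simp

lemma av_of_nat_multiple_le:
  assumes "p dvd n"
  shows "av (of_nat n) \<le> 1 / real p"
proof -
  obtain j where "n = p * j"
    using assms by blast
  then show ?thesis
    using av_of_nat_le_1[of j] av_of_nat_p by (simp add: divide_right_mono)
qed

lemma av_choose_le:
  assumes "n \<in> {p, Suc p}" "2 \<le> k" "k < p"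
  shows "av (of_nat (n choose k)) \<le> 1 / real p"
proof (rule av_of_nat_multiple_le)
  obtain j where k: "k = Suc j"
    using assms by (cases k) auto
  have "p dvd (p choose k)" "p dvd (p choose j)"
    using assms k by (auto intro: dvd_choose_prime prime_p)
  then show "p dvd (n choose k)"
    using assms(1) k by auto
qed

lemma P_lam_diff_le:
  assumes terms: "\<And>n k. n \<in> {p, Suc p} \<Longrightarrow> 1 \<le> k \<Longrightarrow> k \<le> n \<Longrightarrow>
      real p * av (of_nat (n choose k)) * av d ^ k * av w ^ (n - k) \<le> B"
    and B: "0 \<le> B"
  shows "av (P_lam p l (w + d) - P_lam p l w) \<le> B"
proof -
  have scaled: "real p * av ((w + d) ^ n - w ^ n) \<le> B" if n: "n \<in> {p, Suc p}" for n
  proof -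
    have "av ((w + d) ^ n - w ^ n) \<le> B / real p"
      using terms[OF n] p_ge_2 B by (intro av_power_add_diff_le) (simp_all add: field_simps)
    then show ?thesis
      using p_ge_2 by (simp add: field_simps)
  qed
  have "P_lam p l (w + d) - P_lam p l w
      = l / of_nat p * ((w + d) ^ p - w ^ p) + (1 - l / of_nat p) * ((w + d) ^ Suc p - w ^ Suc p)"
    unfolding P_lam_def by (simp add: algebra_simps)
  also have "av \<dots> \<le> B"
    using scaled[of p] scaled[of "Suc p"]
    by (intro av_add_le) (simp_all only: av_mult av_l_div_p av_one_minus_l_div_p, simp_all)
  finally show ?thesis .
qed

lemma P_lam_lipschitz:
  assumes w: "av w \<le> 1" and d: "av d \<le> 1"
  shows "av (P_lam p l (w + d) - P_lam p l w) \<le> real p * av d"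
proof (rule P_lam_diff_le)
  fix n k :: nat assume k: "1 \<le> k"
  have "av (of_nat (n choose k)) * av d ^ k * av w ^ (n - k) \<le> 1 * av d * 1"
    using av_of_nat_le_1 power_decreasing[of 1 k "av d"] k w d
    by (intro mult_mono power_le_one) auto
  then show "real p * av (of_nat (n choose k)) * av d ^ k * av w ^ (n - k) \<le> real p * av d"
    by (simp add: mult.assoc mult_left_mono)
qed simp

lemma binomial_term_le_rho:
  assumes n: "n \<in> {p, Suc p}" and k: "2 \<le> k" and w: "av w \<le> 1" and d: "av d \<le> S_rad p"
  shows "real p * av (of_nat (n choose k)) * av d ^ k * av w ^ (n - k) \<le> rho p * av d"
proof -
  let ?c = "av (of_nat (n choose k) :: 'a)"
  have "real p * ?c * av d ^ k * av w ^ (n - k) \<le> real p * ?c * av d ^ k"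
    using w by (intro mult_left_le power_le_one) auto
  also have "\<dots> \<le> rho p * av d"
  proof (cases "k < p")
    case True
    have "real p * ?c \<le> 1"
      using av_choose_le[OF n k True] p_ge_2 by (simp add: field_simps)
    then have "real p * ?c * av d ^ k \<le> 1 * av d ^ k"
      by (intro mult_right_mono) auto
    also have "\<dots> \<le> S_rad p * av d"
      using power_le_mult_of_le[OF av_nonneg d _ k] S_rad_lt_1[OF p_ge_2] by simp
    also have "\<dots> \<le> rho p * av d"
      using S_rad_lt_rho[OF p_ge_2] by (intro mult_right_mono) auto
    finally show ?thesis .
  next
    case False
    have "real p * ?c * av d ^ k \<le> real p * 1 * av d ^ k"
      using av_of_nat_le_1 by (intro mult_right_mono mult_left_mono) auto
    also have "\<dots> \<le> rho p * av d"
      using power_le_S_rad_mult[OF p_ge_2 av_nonneg d] False by simp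
    finally show ?thesis .
  qed
  finally show ?thesis .
qed

lemma P_lam_diff_le_fine:
  assumes w: "av w \<le> 1" and d: "av d \<le> S_rad p"
    and K: "av w ^ (p - 1) \<le> K" "real p * av w ^ p \<le> K" "rho p \<le> K"
  shows "av (P_lam p l (w + d) - P_lam p l w) \<le> K * av d"
proof (rule P_lam_diff_le)
  fix n k :: nat assume n: "n \<in> {p, Suc p}" and k: "1 \<le> k" "k \<le> n"
  let ?c = "av (of_nat (n choose k) :: 'a)"
  show "real p * ?c * av d ^ k * av w ^ (n - k) \<le> K * av d"
  proof (cases "k = 1")
    case True
    have "real p * ?c * av w ^ (n - 1) \<le> K"
    proof (cases "n = p")
      case True
      then show ?thesis
        using \<open>k = 1\<close> K(1) av_of_nat_p p_ge_2 by simp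
    next
      case False
      then have "real p * ?c * av w ^ (n - 1) = ?c * (real p * av w ^ p)"
        using n by simp
      also have "\<dots> \<le> 1 * K"
        using av_of_nat_le_1 K(2) by (intro mult_mono) auto
      finally show ?thesis
        by simp
    qed
    then have "real p * ?c * av w ^ (n - 1) * av d \<le> K * av d"
      by (rule mult_right_mono) simp
    then show ?thesis
      using True by (simp add: ac_simps)
  next
    case False
    then have "real p * ?c * av d ^ k * av w ^ (n - k) \<le> rho p * av d"
      using binomial_term_le_rho[OF n _ w d] k by simp
    also have "\<dots> \<le> K * av d"
      using K(3) by (intro mult_right_mono) auto
    finally show ?thesis .
  qed
next
  show "0 \<le> K * av d"
    using K(3) rho_pos[OF p_ge_2] by simp
qed

lemma av_P_lam:
  assumes w: "av w < 1"
  shows "av (P_lam p l w) = real p * av w ^ p"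
proof -
  have "P_lam p l w = w ^ p * (l / of_nat p + (1 - l / of_nat p) * w)"
    unfolding P_lam_def by (simp add: algebra_simps)
  moreover have "av (l / of_nat p + (1 - l / of_nat p) * w) = real p"
    using av_add_eq_left[of "(1 - l / of_nat p) * w" "l / of_nat p"] w p_ge_2
    by (simp add: av_l av_of_nat_p av_one_minus_l_div_p)
  ultimately show ?thesis by simp
qed

definition P_taylor :: "nat \<Rightarrow> 'a" where
  "P_taylor k = l / of_nat p * of_nat (p choose k) + (1 - l / of_nat p) * of_nat (Suc p choose k)"

definition P_nonlinear :: "'a \<Rightarrow> 'a" where
  "P_nonlinear u = (\<Sum>k\<in>{2..Suc p}. P_taylor k * u ^ k)"

lemma P_lam_one_plus: "P_lam p l (1 + u) = 1 + (of_nat p + 1 - l / of_nat p) * u + P_nonlinear u"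
proof -
  have binomial: "(1 + u) ^ n = (\<Sum>k\<le>Suc p. of_nat (n choose k) * u ^ k)" if "n \<le> Suc p" for n
  proof -
    have "(1 + u) ^ n = (\<Sum>k\<le>n. of_nat (n choose k) * u ^ k)"
      using binomial_ring[of u 1 n] by (simp add: add.commute)
    also have "\<dots> = (\<Sum>k\<le>Suc p. of_nat (n choose k) * u ^ k)"
      using that by (intro sum.mono_neutral_left) auto
    finally show ?thesis .
  qed
  have "P_lam p l (1 + u) = l / of_nat p * (1 + u) ^ p + (1 - l / of_nat p) * (1 + u) ^ Suc p"
    unfolding P_lam_def by simp
  also have "\<dots> = (\<Sum>k\<le>Suc p. P_taylor k * u ^ k)"
    unfolding binomial[OF le_SucI[OF order_refl]] binomial[OF order_refl] P_taylor_def
    by (simp add: sum_distrib_left sum.distrib[symmetric] algebra_simps)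
  also have "\<dots> = P_taylor 0 + P_taylor 1 * u + P_nonlinear u"
  proof -
    have "{..Suc p} = insert 0 (insert 1 {2..Suc p})"
      by auto
    then show ?thesis
      unfolding P_nonlinear_def by simp
  qed
  also have "\<dots> = 1 + (of_nat p + 1 - l / of_nat p) * u + P_nonlinear u"
    unfolding P_taylor_def using p_ge_2 by (simp add: field_simps)
  finally show ?thesis .
qed

lemma P_nonlinear_0: "P_nonlinear 0 = 0"
  unfolding P_nonlinear_def by simp

lemma P_nonlinear_lipschitz:
  assumes "av u \<le> r" "av u' \<le> r" "r \<le> 1"
  shows "av (P_nonlinear u - P_nonlinear u') \<le> real p * r * av (u - u')"
proof -
  have "av (P_taylor k) \<le> real p" for k
    unfolding P_taylor_def
  proof (rule av_add_le)
    show "av (l / of_nat p * of_nat (p choose k)) \<le> real p"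
      using av_of_nat_le_1 by (simp only: av_mult av_l_div_p) (simp add: mult_left_le)
    show "av ((1 - l / of_nat p) * of_nat (Suc p choose k)) \<le> real p"
      using av_of_nat_le_1 by (simp only: av_mult av_one_minus_l_div_p) (simp add: mult_left_le)
  qed
  then show ?thesis
    unfolding P_nonlinear_def using assms by (intro av_sum_powers_diff_le) auto
qed

end

section \<open>The fixed point h and the conjugated map\<close>

locale perturbed_family = lambda_poly av p l + power_series_ball av rhat a
  for av :: "'a::field_char_0 \<Rightarrow> real" and p l rhat a +
  assumes ps_norm_lt_rho: "ps_norm av rhat a < rho p"
begin

abbreviation Q :: "'a \<Rightarrow> 'a" where "Q \<equiv> ps_eval av a"
abbreviation normQ :: real where "normQ \<equiv> ps_norm av rhat a"

lemma normQ_lt_1: "normQ < 1"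
  using ps_norm_lt_rho rho_lt_1[OF p_ge_2] by linarith

lemma av_le_1_imp_le_rhat: "av z \<le> 1 \<Longrightarrow> av z \<le> rhat"
  using rhat_ge_1 by linarith

lemma av_one_plus_le_1: "av u \<le> 1 \<Longrightarrow> av (1 + u) \<le> 1"
  by (simp add: av_add_le)

lemma av_p_minus_l_div_p: "av (of_nat p - l / of_nat p) = real p"
proof -
  have "1 / real p < 1" "1 \<le> real p"
    using p_ge_2 by auto
  then have "av (of_nat p :: 'a) < av (l / of_nat p)"
    unfolding av_of_nat_p av_l_div_p by linarith
  then show ?thesis
    using av_diff_eq_left[of "of_nat p" "l / of_nat p"] av_l_div_p av_minus_commute by metis
qed

lemma av_Q1_div_p_le_av_Q1: "av (Q 1) / real p \<le> av (Q 1)"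
proof -
  have "av (Q 1) / real p \<le> av (Q 1) / 1"
    using p_ge_2 by (intro divide_left_mono) auto
  then show ?thesis
    by simp
qed

lemma av_Q1_div_p_le: "av (Q 1) / real p \<le> normQ"
  using av_Q1_div_p_le_av_Q1 ps_eval_av_le[of 1] rhat_ge_1 by simp

lemma av_Q1_div_p_lt_1: "av (Q 1) / real p < 1"
  using av_Q1_div_p_le normQ_lt_1 by linarith

text \<open>Writing a fixed point of \<open>P_lam p l + Q\<close> as \<open>1 + u\<close> and solving for the linear
  term, whose coefficient \<open>p - \<lambda>/p\<close> has absolute value \<open>p\<close>, turns the fixed point
  equation into a contraction.\<close>

definition fixpoint_map :: "'a \<Rightarrow> 'a" where
  "fixpoint_map u = - (P_nonlinear u + Q (1 + u)) / (of_nat p - l / of_nat p)"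

lemma p_minus_l_div_p_neq_0: "of_nat p - l / of_nat p \<noteq> 0"
  using av_p_minus_l_div_p p_ge_2 by auto

lemma fixpoint_map_fixed_iff: "fixpoint_map u = u \<longleftrightarrow> P_lam p l (1 + u) + Q (1 + u) = 1 + u"
  unfolding fixpoint_map_def P_lam_one_plus using p_minus_l_div_p_neq_0 by (auto simp: field_simps)

lemma av_fixpoint_map: "av (fixpoint_map u) = av (P_nonlinear u + Q (1 + u)) / real p"
  unfolding fixpoint_map_def by (simp only: av_divide av_minus av_p_minus_l_div_p)

lemma fixpoint_map_diff:
  "fixpoint_map u - fixpoint_map u'
    = - ((P_nonlinear u - P_nonlinear u') + (Q (1 + u) - Q (1 + u'))) / (of_nat p - l / of_nat p)"
proof -
  have "- (P_nonlinear u + Q (1 + u)) - - (P_nonlinear u' + Q (1 + u'))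
      = - ((P_nonlinear u - P_nonlinear u') + (Q (1 + u) - Q (1 + u')))"
    by (simp add: algebra_simps)
  then show ?thesis
    unfolding fixpoint_map_def diff_divide_distrib[symmetric] by (rule arg_cong)
qed

lemma fixpoint_map_contraction:
  assumes u: "av u \<le> av (Q 1) / real p" and u': "av u' \<le> av (Q 1) / real p"
  shows "av (fixpoint_map u - fixpoint_map u') \<le> normQ / real p * av (u - u')"
proof -
  have Q1: "av (Q 1) \<le> normQ"
    using ps_eval_av_le rhat_ge_1 by simp
  have r_le_1: "av (Q 1) / real p \<le> 1"
    using av_Q1_div_p_lt_1 by simp
  have "av (1 + u) \<le> rhat" "av (1 + u') \<le> rhat"
    using u u' r_le_1 av_one_plus_le_1 av_le_1_imp_le_rhat by auto
  note Q_lip = ps_eval_lipschitz[OF this]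
  have "av (P_nonlinear u - P_nonlinear u') \<le> real p * (av (Q 1) / real p) * av (u - u')"
    using P_nonlinear_lipschitz[OF u u' r_le_1] .
  also have "\<dots> \<le> normQ * av (u - u')"
    using Q1 p_ge_2 by (simp add: mult_right_mono)
  finally have "av (P_nonlinear u - P_nonlinear u') \<le> normQ * av (u - u')" .
  moreover have "av (Q (1 + u) - Q (1 + u')) \<le> normQ * av (u - u')"
    using Q_lip by simp
  ultimately have numerator:
    "av ((P_nonlinear u - P_nonlinear u') + (Q (1 + u) - Q (1 + u'))) \<le> normQ * av (u - u')"
    by (rule av_add_le)
  have "av (fixpoint_map u - fixpoint_map u')
      = av ((P_nonlinear u - P_nonlinear u') + (Q (1 + u) - Q (1 + u'))) / real p"
    unfolding fixpoint_map_diff by (simp only: av_divide av_minus av_p_minus_l_div_p)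
  also have "\<dots> \<le> normQ * av (u - u') / real p"
    using numerator by (rule divide_right_mono) simp
  finally show ?thesis
    by simp
qed

lemma fixpoint_map_maps_ball:
  assumes u: "av u \<le> av (Q 1) / real p"
  shows "av (fixpoint_map u) \<le> av (Q 1) / real p"
proof -
  have u_le_1: "av u \<le> 1"
    using u av_Q1_div_p_lt_1 by simp
  have "av (P_nonlinear u - P_nonlinear 0) \<le> real p * 1 * av (u - 0)"
    using P_nonlinear_lipschitz[OF u_le_1, of 0] by simp
  then have "av (P_nonlinear u) \<le> av (Q 1)"
    using u p_ge_2 by (simp add: P_nonlinear_0 field_simps)
  moreover have "av (Q (1 + u) - Q 1) \<le> av (Q 1)"
  proof -
    have "av (Q (1 + u) - Q 1) \<le> normQ * av u"
      using ps_eval_lipschitz[of "1 + u" 1] av_one_plus_le_1[OF u_le_1] rhat_ge_1 by simp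
    also have "\<dots> \<le> av u"
      using normQ_lt_1 by (simp add: mult_left_le_one_le ps_norm_nonneg)
    also have "\<dots> \<le> av (Q 1)"
      using u av_Q1_div_p_le_av_Q1 by linarith
    finally show ?thesis .
  qed
  ultimately have "av (P_nonlinear u + Q (1 + u)) \<le> av (Q 1)"
    using av_add_le[of "Q (1 + u) - Q 1" "av (Q 1)" "Q 1"] by (simp add: av_add_le)
  then show ?thesis
    unfolding av_fixpoint_map using p_ge_2 by (simp add: divide_right_mono)
qed

abbreviation h :: 'a where "h \<equiv> h_fix av p a l"

lemma h_near_1: "av (h - 1) \<le> normQ"
proof -
  have r: "0 \<le> av (Q 1) / real p" "av (Q 1) / real p \<le> normQ"
    using av_Q1_div_p_le by auto
  have q: "0 \<le> normQ / real p" "normQ / real p < 1"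
    using ps_norm_nonneg normQ_lt_1 p_ge_2 by (auto simp: divide_less_eq)
  obtain u where u: "av u \<le> av (Q 1) / real p" "fixpoint_map u = u"
    and unique: "\<And>v. av v \<le> av (Q 1) / real p \<Longrightarrow> fixpoint_map v = v \<Longrightarrow> v = u"
    using contraction_unique_fixpoint[OF r(1) q fixpoint_map_maps_ball fixpoint_map_contraction]
    by blast
  have "h = 1 + u"
    unfolding h_fix_def
  proof (rule the_equality)
    show "av (1 + u - 1) \<le> av (Q 1) / real p \<and> P_lam p l (1 + u) + Q (1 + u) = 1 + u"
      using u fixpoint_map_fixed_iff by simp
  next
    fix z assume "av (z - 1) \<le> av (Q 1) / real p \<and> P_lam p l z + Q z = z"
    then have "z - 1 = u"
      using unique[of "z - 1"] fixpoint_map_fixed_iff[of "z - 1"] by simp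
    then show "z = 1 + u"
      by (simp add: algebra_simps)
  qed
  then show ?thesis
    using u r by simp
qed

abbreviation f :: "'a \<Rightarrow> 'a" where "f \<equiv> Q_lam av p a l"

lemma Q_lam_diff_eq:
  "f y - f x = (P_lam p l ((x + h - 1) + (y - x)) - P_lam p l (x + h - 1))
     + (Q ((x + h - 1) + (y - x)) - Q (x + h - 1))"
  unfolding Q_lam_def Let_def by (simp add: algebra_simps)

lemma av_conj_shift_le_max: "av (x + h - 1) \<le> max (av x) normQ"
proof -
  have "av (x + (h - 1)) \<le> max (av x) normQ"
    using order_trans[OF av_add_le_max max.mono[OF order_refl h_near_1]] .
  then show ?thesis
    by (simp add: algebra_simps)
qed

lemma av_P_lam_conj_le_max:
  assumes "av (x + h - 1) \<le> 1"
  shows "av (P_lam p l (x + h - 1)) \<le> max (av (f x)) normQ"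
proof -
  let ?w = "x + h - 1"
  have "P_lam p l ?w = f x - (Q ?w + (1 - h))"
    unfolding Q_lam_def Let_def by (simp add: algebra_simps)
  moreover have "av (Q ?w + (1 - h)) \<le> normQ"
    using ps_eval_av_le[of ?w] assms av_le_1_imp_le_rhat h_near_1 av_minus_commute[of 1 h]
    by (simp add: av_add_le)
  ultimately show ?thesis
    using order_trans[OF av_diff_le_max max.mono[OF order_refl]] by metis
qed

lemma Q_lam_lipschitz:
  assumes x: "av x \<le> 1" and y: "av y \<le> 1"
  shows "av (f y - f x) \<le> real p * av (y - x)"
proof -
  let ?w = "x + h - 1"
  have w: "av ?w \<le> 1" and w': "av (?w + (y - x)) \<le> 1"
    using av_conj_shift_le_max[of x] av_conj_shift_le_max[of y] x y normQ_lt_1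
    by (simp_all add: algebra_simps)
  have d: "av (y - x) \<le> 1"
    using av_diff_le_max[of y x] x y by simp
  have "av (Q (?w + (y - x)) - Q ?w) \<le> normQ * av (y - x)"
    using ps_eval_lipschitz[of "?w + (y - x)" ?w] w w' av_le_1_imp_le_rhat by simp
  also have "\<dots> \<le> real p * av (y - x)"
    using normQ_lt_1 p_ge_2 by (intro mult_right_mono) auto
  finally show ?thesis
    unfolding Q_lam_diff_eq using P_lam_lipschitz[OF w d] by (rule av_add_le[rotated])
qed

lemma Q_lam_diff_le_rho_seq:
  assumes x: "av x \<le> rho_seq p (Suc j)" and d: "av (y - x) \<le> S_rad p"
  shows "av (f y - f x) \<le> rho_seq p j * av (y - x)"
proof -
  note rho_seq = rho_seq_bounds[OF p_ge_2]
  let ?w = "x + h - 1"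
  have "max (av x) normQ \<le> rho_seq p (Suc j)"
    using x ps_norm_lt_rho rho_seq[of "Suc j"] by simp
  then have w: "av ?w \<le> rho_seq p (Suc j)"
    using av_conj_shift_le_max[of x] by linarith
  then have w1: "av ?w \<le> 1"
    using rho_seq[of "Suc j"] by linarith
  have K1: "av ?w ^ (p - 1) \<le> rho_seq p j"
    using power_mono[OF w, of "p - 1"] rho_seq_Suc_power_le[OF p_ge_2, of j] by simp
  have "real p * av ?w ^ p \<le> real p * rho_seq p (Suc j) ^ p"
    using power_mono[OF w, of p] by (intro mult_left_mono) auto
  then have K2: "real p * av ?w ^ p \<le> rho_seq p j"
    unfolding rho_seq_Suc_power[OF p_ge_2] .
  have K3: "rho p \<le> rho_seq p j"
    using rho_seq by simp
  have w': "av (?w + (y - x)) \<le> 1"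
    using av_add_le[OF w1, of "y - x"] d S_rad_lt_1[OF p_ge_2] by simp
  have "av (Q (?w + (y - x)) - Q ?w) \<le> normQ * av (y - x)"
    using ps_eval_lipschitz[of "?w + (y - x)" ?w] w1 w' av_le_1_imp_le_rhat by simp
  also have "\<dots> \<le> rho_seq p j * av (y - x)"
    using ps_norm_lt_rho K3 by (intro mult_right_mono) auto
  finally show ?thesis
    unfolding Q_lam_diff_eq using P_lam_diff_le_fine[OF w1 d K1 K2 K3] by (rule av_add_le[rotated])
qed

lemma Q_lam_preimage_le_rho_seq:
  assumes x: "av x < 1" and fx: "av (f x) \<le> rho_seq p j"
  shows "av x \<le> rho_seq p (Suc j)"
proof -
  note rho_seq = rho_seq_bounds[OF p_ge_2]
  let ?w = "x + h - 1"
  have w: "av ?w < 1"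
    using av_conj_shift_le_max[of x] x normQ_lt_1 by simp
  have "max (av (f x)) normQ \<le> rho_seq p j"
    using fx ps_norm_lt_rho rho_seq[of j] by simp
  then have "av (P_lam p l ?w) \<le> rho_seq p j"
    using av_P_lam_conj_le_max[OF less_imp_le[OF w]] by linarith
  then have "real p * av ?w ^ p \<le> rho_seq p j"
    using av_P_lam[OF w] by simp
  then have "real p * av ?w ^ p \<le> real p * rho_seq p (Suc j) ^ p"
    unfolding rho_seq_Suc_power[OF p_ge_2] .
  then have "av ?w ^ p \<le> rho_seq p (Suc j) ^ p"
    using p_ge_2 by simp
  moreover obtain k where "p = Suc k"
    using p_ge_2 by (cases p) auto
  ultimately have "av ?w \<le> rho_seq p (Suc j)"
    using rho_seq[of "Suc j"] power_le_imp_le_base[of "av ?w" k] by simp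
  moreover have "av (h - 1) \<le> rho_seq p (Suc j)"
    using h_near_1 rho_seq[of "Suc j"] ps_norm_lt_rho by simp
  ultimately have "av (?w - (h - 1)) \<le> rho_seq p (Suc j)"
    by (rule av_diff_le)
  then show ?thesis
    by simp
qed

end

section \<open>Itineraries made of blocks\<close>

context
  fixes m M :: "nat \<Rightarrow> nat"
begin

lemma blk_start_mono: "i \<le> j \<Longrightarrow> blk_start m M i \<le> blk_start m M j"
  by (induction j rule: dec_induct) auto

lemma blk_start_ge: "(\<And>i. 0 < m i) \<Longrightarrow> i \<le> blk_start m M i"
proof (induction i)
  case (Suc i)
  then have "0 < m i" "i \<le> blk_start m M i"
    by auto
  then show ?case
    by simp
qed simp

lemma blk_start_cover:
  assumes "\<And>i. 0 < m i"
  shows "\<exists>i t. n = blk_start m M i + t \<and> t < m i + M i"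
proof (induction n)
  case 0
  show ?case
    using assms[of 0] by (intro exI[of _ 0]) auto
next
  case (Suc n)
  then obtain i t where n: "n = blk_start m M i + t" "t < m i + M i"
    by blast
  show ?case
  proof (cases "Suc t < m i + M i")
    case True
    then show ?thesis
      using n by (intro exI[of _ i] exI[of _ "Suc t"]) auto
  next
    case False
    then have "Suc n = blk_start m M (Suc i) + 0"
      using n by simp
    then show ?thesis
      using assms[of "Suc i"] by blast
  qed
qed

lemma itin_zero_block: "t < m i \<Longrightarrow> itin m M (blk_start m M i + t) = 0"
  unfolding itin_def by (intro if_P exI[of _ i]) simp

lemma itin_one_block:
  assumes t: "t < M i"
  shows "itin m M (blk_start m M i + m i + t) = 1"
proof -
  let ?n = "blk_start m M i + m i + t"
  have "\<not> (blk_start m M j \<le> ?n \<and> ?n < blk_start m M j + m j)" for j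
  proof (cases j i rule: linorder_cases)
    case less
    then show ?thesis
      using blk_start_mono[of "Suc j" i] by auto
  next
    case greater
    then show ?thesis
      using blk_start_mono[of "Suc i" j] t by auto
  qed simp
  then show ?thesis
    unfolding itin_def by (intro if_not_P) blast
qed

lemma itin_0_or_1: "itin m M n = 0 \<or> itin m M n = 1"
  unfolding itin_def by presburger

lemma itin_not_eventually_periodic:
  assumes m: "\<And>i. 0 < m i" and M: "filterlim M at_top sequentially" and e: "0 < e"
  shows "\<not> (\<forall>j\<ge>N. itin m M j = itin m M (j + e))"
proof
  assume periodic: "\<forall>j\<ge>N. itin m M j = itin m M (j + e)"
  have "eventually (\<lambda>i. e \<le> M i) sequentially"
    using M by (simp add: filterlim_at_top)
  then obtain I where I: "\<And>i. I \<le> i \<Longrightarrow> e \<le> M i"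
    unfolding eventually_sequentially by blast
  define i where "i = max I N"
  have i: "N \<le> i" "e \<le> M i"
    using I[of i] unfolding i_def by auto
  define j where "j = blk_start m M i + m i + (M i - e)"
  have "itin m M j = 1"
    unfolding j_def using i e by (intro itin_one_block) simp
  moreover have "j + e = blk_start m M (Suc i) + 0"
    unfolding j_def using i by simp
  then have "itin m M (j + e) = 0"
    by (simp only: itin_zero_block[of 0 "Suc i", OF m])
  moreover have "N \<le> j"
    unfolding j_def using i blk_start_ge[OF m, of i] by simp
  then have "itin m M j = itin m M (j + e)"
    using periodic by blast
  ultimately show False
    by simp
qed

end

section \<open>Tracking an orbit with a prescribed itinerary\<close>

context perturbed_family
begin

lemma Q_lam_iterate_lipschitz:
  assumes "\<And>n. av ((f ^^ n) y) \<le> 1" "\<And>n. av ((f ^^ n) y') \<le> 1"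
  shows "av ((f ^^ t) y - (f ^^ t) y') \<le> real p ^ t * av (y - y')"
proof (induction t)
  case (Suc t)
  have "av ((f ^^ Suc t) y - (f ^^ Suc t) y') \<le> real p * av ((f ^^ t) y - (f ^^ t) y')"
    using Q_lam_lipschitz[OF assms(2)[of t] assms(1)[of t]] by simp
  also have "\<dots> \<le> real p * (real p ^ t * av (y - y'))"
    using Suc by (intro mult_left_mono) auto
  finally show ?case
    by simp
qed simp

end

locale itinerary_orbit = perturbed_family +
  fixes m M :: "nat \<Rightarrow> nat" and z0 :: 'a
  assumes zero_blocks_nonempty: "\<And>i. 0 < m i"
    and block_product_le_1: "\<And>i. (\<Prod>k\<in>{1..<m i}. rho_seq p k) * real p ^ M i \<le> 1"
    and orbit_itinerary: "\<And>n.
      (itin m M n = 0 \<longrightarrow> av ((Q_lam av p a l ^^ n) z0) < 1)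
      \<and> (itin m M n = 1 \<longrightarrow> av ((Q_lam av p a l ^^ n) z0 - 1) < 1)"
begin

abbreviation orb :: "nat \<Rightarrow> 'a" where "orb n \<equiv> (f ^^ n) z0"
abbreviation block :: "nat \<Rightarrow> nat" where "block i \<equiv> blk_start m M i"

lemma av_orb_lt_1: "itin m M n = 0 \<Longrightarrow> av (orb n) < 1"
  using orbit_itinerary by blast

lemma av_orb_eq_1: "itin m M n = 1 \<Longrightarrow> av (orb n) = 1"
  using orbit_itinerary[of n] av_add_eq_left[of "orb n - 1" 1] by simp

lemma av_orb_le_1: "av (orb n) \<le> 1"
  using itin_0_or_1[of m M n] av_orb_lt_1[of n] av_orb_eq_1[of n] by auto

lemma itin_eq_if_orb_close:
  assumes "av (orb i - orb j) < 1"
  shows "itin m M i = itin m M j"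
proof (rule ccontr)
  assume "itin m M i \<noteq> itin m M j"
  then have "av (orb i) < 1 \<and> av (orb j) = 1 \<or> av (orb j) < 1 \<and> av (orb i) = 1"
    using itin_0_or_1[of m M i] itin_0_or_1[of m M j] av_orb_lt_1 av_orb_eq_1 by metis
  then have "av (orb i - orb j) = 1"
    using av_diff_eq_left[of "orb i" "orb j"] av_diff_eq_left[of "orb j" "orb i"] av_minus_commute
    by auto
  then show False
    using assms by simp
qed

lemma orb_Suc: "orb (Suc n) = f (orb n)"
  by simp

lemma av_orb_zero_block:
  assumes "d < m i"
  shows "av (orb (block i + (m i - Suc d))) \<le> rho_seq p (Suc d)"
  using assms
proof (induction d)
  case 0
  let ?n = "block i + (m i - 1)"
  have "Suc ?n = block i + m i"
    using 0 by simp
  then have "av (f (orb ?n)) \<le> rho_seq p 0"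
    using av_orb_le_1[of "block i + m i"] unfolding orb_Suc[symmetric] by simp
  moreover have "itin m M ?n = 0"
    using 0 by (intro itin_zero_block) simp
  ultimately show ?case
    using Q_lam_preimage_le_rho_seq av_orb_lt_1 by simp
next
  case (Suc d)
  let ?n = "block i + (m i - Suc (Suc d))"
  have "Suc ?n = block i + (m i - Suc d)"
    using Suc.prems by simp
  then have "av (f (orb ?n)) \<le> rho_seq p (Suc d)"
    using Suc by (simp flip: orb_Suc)
  moreover have "itin m M ?n = 0"
    using Suc.prems by (intro itin_zero_block) simp
  ultimately show ?case
    using Q_lam_preimage_le_rho_seq av_orb_lt_1 by simp
qed

lemma av_le_1_if_near_orb: "av (y - orb n) \<le> S_rad p \<Longrightarrow> av y \<le> 1"
  using av_add_le[of "y - orb n" 1 "orb n"] av_orb_le_1[of n] S_rad_lt_1[OF p_ge_2] by simp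

lemma rho_seq_prod_bounds: "0 \<le> (\<Prod>k\<in>A. rho_seq p k) \<and> (\<Prod>k\<in>A. rho_seq p k) \<le> 1"
  using rho_seq_bounds[OF p_ge_2] by (auto intro: prod_nonneg prod_le_1 less_imp_le)

lemma track_zero_block:
  assumes D0: "av ((f ^^ block i) z - orb (block i)) \<le> S_rad p" and "t \<le> m i"
  shows "av ((f ^^ (block i + t)) z - orb (block i + t))
      \<le> (\<Prod>k\<in>{m i - t..<m i}. rho_seq p k) * av ((f ^^ block i) z - orb (block i))"
  using \<open>t \<le> m i\<close>
proof (induction t)
  case (Suc t)
  let ?D = "\<lambda>t. av ((f ^^ (block i + t)) z - orb (block i + t))"
  let ?P = "\<lambda>t. \<Prod>k\<in>{m i - t..<m i}. rho_seq p k"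
  have t: "t < m i"
    using Suc.prems by simp
  have IH: "?D t \<le> ?P t * ?D 0"
    using Suc by simp
  have "?D t \<le> S_rad p"
    using IH D0 rho_seq_prod_bounds[of "{m i - t..<m i}"] mult_left_le_one_le[of "?D 0" "?P t"]
    by simp
  moreover have "av (orb (block i + t)) \<le> rho_seq p (Suc (m i - Suc t))"
    using av_orb_zero_block[of "m i - Suc t" i] t by simp
  ultimately have "?D (Suc t) \<le> rho_seq p (m i - Suc t) * ?D t"
    using Q_lam_diff_le_rho_seq by simp
  also have "\<dots> \<le> rho_seq p (m i - Suc t) * (?P t * ?D 0)"
    using IH rho_seq_bounds[OF p_ge_2] by (intro mult_left_mono) (auto intro: less_imp_le)
  also have "\<dots> = ?P (Suc t) * ?D 0"
  proof -
    have "{m i - Suc t..<m i} = insert (m i - Suc t) {m i - t..<m i}"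
      using t by auto
    then show ?thesis
      using t by simp
  qed
  finally show ?case
    by simp
qed simp

lemma track_one_block:
  assumes D0: "av ((f ^^ block i) z - orb (block i)) \<le> S_rad p" and "t \<le> M i"
  shows "av ((f ^^ (block i + m i + t)) z - orb (block i + m i + t))
      \<le> (\<Prod>k\<in>{1..<m i}. rho_seq p k) * real p ^ t * av ((f ^^ block i) z - orb (block i))"
  using \<open>t \<le> M i\<close>
proof (induction t)
  case 0
  have "{0..<m i} = insert 0 {1..<m i}"
    using zero_blocks_nonempty[of i] by auto
  then show ?case
    using track_zero_block[OF D0, of "m i"] by simp
next
  case (Suc t)
  let ?D = "\<lambda>t. av ((f ^^ (block i + m i + t)) z - orb (block i + m i + t))"
  let ?start = "av ((f ^^ block i) z - orb (block i))"
  let ?P = "\<Prod>k\<in>{1..<m i}. rho_seq p k"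
  have IH: "?D t \<le> ?P * real p ^ t * ?start"
    using Suc by simp
  have "?P * real p ^ t \<le> ?P * real p ^ M i"
    using Suc.prems rho_seq_prod_bounds p_ge_2 by (intro mult_left_mono power_increasing) auto
  then have "?P * real p ^ t \<le> 1"
    using block_product_le_1[of i] by linarith
  then have "?D t \<le> S_rad p"
    using IH D0 mult_left_le_one_le[of ?start "?P * real p ^ t"] rho_seq_prod_bounds by simp
  then have "?D (Suc t) \<le> real p * ?D t"
    using Q_lam_lipschitz[OF av_orb_le_1 av_le_1_if_near_orb] by simp
  also have "\<dots> \<le> real p * (?P * real p ^ t * ?start)"
    using IH by (intro mult_left_mono) auto
  finally show ?case
    by (simp add: algebra_simps)
qed

lemma track_block:
  assumes D0: "av ((f ^^ block i) z - orb (block i)) \<le> S_rad p" and t: "t \<le> m i + M i"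
  shows "av ((f ^^ (block i + t)) z - orb (block i + t)) \<le> av ((f ^^ block i) z - orb (block i))"
proof (cases "t \<le> m i")
  case True
  then show ?thesis
    using track_zero_block[OF D0 True] rho_seq_prod_bounds
      mult_left_le_one_le[of "av ((f ^^ block i) z - orb (block i))" "\<Prod>k\<in>{m i - t..<m i}. rho_seq p k"]
    by simp
next
  case False
  define t' where "t' = t - m i"
  have t': "t = m i + t'" "t' \<le> M i"
    using False t unfolding t'_def by auto
  let ?P = "\<Prod>k\<in>{1..<m i}. rho_seq p k"
  have "?P * real p ^ t' \<le> ?P * real p ^ M i"
    using t' rho_seq_prod_bounds p_ge_2 by (intro mult_left_mono power_increasing) auto
  then have "?P * real p ^ t' \<le> 1"
    using block_product_le_1[of i] by linarith
  then show ?thesis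
    using track_one_block[OF D0 t'(2)] rho_seq_prod_bounds
      mult_left_le_one_le[of "av ((f ^^ block i) z - orb (block i))" "?P * real p ^ t'"]
    by (simp add: t'(1) add.assoc)
qed

lemma track_orbit:
  assumes z: "av (z - z0) \<le> S_rad p"
  shows "av ((f ^^ n) z - orb n) \<le> av (z - z0)"
proof -
  have start: "av ((f ^^ block i) z - orb (block i)) \<le> av (z - z0)" for i
  proof (induction i)
    case (Suc i)
    then have "av ((f ^^ block i) z - orb (block i)) \<le> S_rad p"
      using z by linarith
    then have "av ((f ^^ (block i + (m i + M i))) z - orb (block i + (m i + M i))) \<le> av (z - z0)"
      using track_block[of i z "m i + M i"] Suc by simp
    then show ?case
      by (simp add: add.assoc)
  qed simp
  obtain i t where n: "n = block i + t" "t < m i + M i"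
    using blk_start_cover[where m = m and M = M, OF zero_blocks_nonempty] by blast
  have "av ((f ^^ block i) z - orb (block i)) \<le> S_rad p"
    using start[of i] z by linarith
  then show ?thesis
    using track_block[of i z t] start[of i] n by simp
qed

end

context itinerary_orbit
begin

abbreviation disc :: "'a set" where "disc \<equiv> {z. av (z - z0) \<le> S_rad p}"

lemma av_orbit_of_disc_le_1:
  assumes "z \<in> disc"
  shows "av ((f ^^ n) z) \<le> 1"
proof (rule av_le_1_if_near_orb)
  show "av ((f ^^ n) z - orb n) \<le> S_rad p"
    using track_orbit[of z n] assms by simp
qed

lemma disc_subset_K_set: "disc \<subseteq> K_set av rhat f"
  unfolding K_set_def using av_orbit_of_disc_le_1 rhat_ge_1 by (auto intro: order_trans)

lemma itin_eq_if_disc_orbits_close: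
  assumes y: "y \<in> disc" and y': "y' \<in> disc" and close: "av ((f ^^ j) y - (f ^^ k) y') < 1"
  shows "itin m M j = itin m M k"
proof (rule itin_eq_if_orb_close)
  have "av (orb j - (f ^^ j) y) < 1" "av ((f ^^ k) y' - orb k) < 1"
    using track_orbit[of y j] track_orbit[of y' k] y y' S_rad_lt_1[OF p_ge_2] av_minus_commute
    by (auto simp del: av_minus)
  then show "av (orb j - orb k) < 1"
    using av_diff_triangle[of "orb j" "orb k" "(f ^^ j) y"] av_diff_triangle[of "(f ^^ j) y" "orb k" "(f ^^ k) y'"]
      close by simp
qed

lemma disc_orbits_do_not_meet_late:
  assumes M: "filterlim M at_top sequentially" and nk: "n < k"
    and y: "y \<in> disc" and y': "y' \<in> disc" and meet: "(f ^^ n) y = (f ^^ k) y'"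
  shows False
proof -
  have "itin m M j = itin m M (j + (k - n))" if "n \<le> j" for j
  proof (rule itin_eq_if_disc_orbits_close[OF y y'])
    have "(f ^^ j) y = (f ^^ ((j - n) + n)) y"
      using that by simp
    also have "\<dots> = (f ^^ (j - n)) ((f ^^ k) y')"
      by (simp only: funpow_add o_apply meet)
    also have "\<dots> = (f ^^ ((j - n) + k)) y'"
      by (simp only: funpow_add o_apply)
    also have "(j - n) + k = j + (k - n)"
      using that nk by simp
    finally show "av ((f ^^ j) y - (f ^^ (j + (k - n))) y') < 1"
      by simp
  qed
  then have "\<forall>j\<ge>n. itin m M j = itin m M (j + (k - n))"
    by blast
  moreover have "0 < k - n"
    using nk by simp
  ultimately show False
    using itin_not_eventually_periodic[where m = m, OF zero_blocks_nonempty M] by blast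
qed

lemma disc_wandering:
  assumes "filterlim M at_top sequentially"
  shows "wandering_disc f disc"
  unfolding wandering_disc_def
proof (intro allI impI)
  fix n k
  assume "(f ^^ n) ` disc \<inter> (f ^^ k) ` disc \<noteq> {}"
  then obtain y y' where y: "y \<in> disc" "y' \<in> disc" and meet: "(f ^^ n) y = (f ^^ k) y'"
    by auto
  show "n = k"
  proof (rule linorder_cases[of n k])
    assume "n < k"
    then show ?thesis
      using disc_orbits_do_not_meet_late[OF assms _ y meet] by blast
  next
    assume "k < n"
    then show ?thesis
      using disc_orbits_do_not_meet_late[OF assms _ y(2,1) meet[symmetric]] by blast
  qed
qed

lemma orbit_in_basin_eventually_k_close:
  assumes z: "z \<in> disc" and k: "0 < k" and L: "v_lim av (\<lambda>n. (f ^^ (n * k)) z) L"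
  obtains N where "\<And>j. N \<le> j \<Longrightarrow> av ((f ^^ j) z - (f ^^ (j + k)) z) < 1"
proof -
  have "0 < 1 / real p ^ k"
    using p_ge_2 by simp
  then obtain N where "\<forall>n\<ge>N. norm (av ((f ^^ (n * k)) z - L) - 0) < 1 / real p ^ k"
    using L unfolding v_lim_def LIMSEQ_iff by blast
  then have N: "\<And>n. N \<le> n \<Longrightarrow> av ((f ^^ (n * k)) z - L) < 1 / real p ^ k"
    by simp
  have "av ((f ^^ j) z - (f ^^ (j + k)) z) < 1" if j: "N * k \<le> j" for j
  proof -
    define n t where "n = j div k" and "t = j mod k"
    have "N * k div k \<le> n"
      unfolding n_def using j by (rule div_le_mono)
    then have jn: "j = t + n * k" "j + k = t + Suc n * k" "t < k" "N \<le> n"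
      using k unfolding n_def t_def by auto
    have bounded: "av ((f ^^ i) ((f ^^ n') z)) \<le> 1" for i n'
      using av_orbit_of_disc_le_1[OF z, of "i + n'"] by (simp add: funpow_add)
    have "(f ^^ j) z = (f ^^ t) ((f ^^ (n * k)) z)"
      using jn(1) by (simp only: funpow_add o_apply)
    moreover have "(f ^^ (j + k)) z = (f ^^ t) ((f ^^ (Suc n * k)) z)"
      using jn(2) by (simp only: funpow_add o_apply)
    ultimately have "av ((f ^^ j) z - (f ^^ (j + k)) z)
        \<le> real p ^ t * av ((f ^^ (n * k)) z - (f ^^ (Suc n * k)) z)"
      using Q_lam_iterate_lipschitz[OF bounded bounded] by simp
    also have "\<dots> < real p ^ t * (1 / real p ^ k)"
    proof -
      have "av ((f ^^ (n * k)) z - L) < 1 / real p ^ k"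
        "av (L - (f ^^ (Suc n * k)) z) < 1 / real p ^ k"
        using N[of n] N[of "Suc n"] jn(4) av_minus_commute[of L] by auto
      then have "av ((f ^^ (n * k)) z - (f ^^ (Suc n * k)) z) < 1 / real p ^ k"
        using av_diff_triangle[of "(f ^^ (n * k)) z" "(f ^^ (Suc n * k)) z" L] by simp
      then show ?thesis
        using p_ge_2 by (intro mult_strict_left_mono) auto
    qed
    also have "\<dots> \<le> 1"
      using jn p_ge_2 power_increasing[of t k "real p"] by (simp add: field_simps)
    finally show ?thesis .
  qed
  then show ?thesis
    using that by blast
qed

lemma disc_not_attracted:
  assumes M: "filterlim M at_top sequentially"
  shows "not_attracted av rhat f disc"
  unfolding not_attracted_def
proof
  assume "\<exists>z\<in>disc. \<exists>c r w k. r > 0 \<and> av (z - c) < r \<and> w \<in> K_set av rhat f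
      \<and> attracting_cycle av f w k \<and> {y. av (y - c) < r} \<subseteq> basin av f w k"
  then obtain z c r w k where z: "z \<in> disc" and "av (z - c) < r"
    and cycle: "attracting_cycle av f w k" and "{y. av (y - c) < r} \<subseteq> basin av f w k"
    by blast
  then have "z \<in> basin av f w k"
    by blast
  then obtain L where L: "v_lim av (\<lambda>n. (f ^^ (n * k)) z) L"
    unfolding basin_def by blast
  have k: "0 < k"
    using cycle unfolding attracting_cycle_def by blast
  obtain N where "\<And>j. N \<le> j \<Longrightarrow> av ((f ^^ j) z - (f ^^ (j + k)) z) < 1"
    using orbit_in_basin_eventually_k_close[OF z k L] by blast
  then have "\<forall>j\<ge>N. itin m M j = itin m M (j + k)"
    using itin_eq_if_disc_orbits_close[OF z z] by blast
  then show False
    using itin_not_eventually_periodic[where m = m, OF zero_blocks_nonempty M k] by blast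
qed

end

theorem lemma3p10:
  fixes av :: "'a::field_char_0 \<Rightarrow> real" and p :: nat and rhat :: real
    and a :: "nat \<Rightarrow> 'a" and m M :: "nat \<Rightarrow> nat" and l0 z0 :: 'a
  assumes Cp: "is_Cp av p"
    and rhat: "rhat > 1" "\<exists>c. c \<noteq> 0 \<and> av c = rhat"
    and HB: "in_HB av rhat a" and Qsmall: "ps_norm av rhat a < rho p"
    and pos: "\<forall>i. m i > 0 \<and> M i > 0"
    and prodle: "\<forall>i. (\<Prod>k\<in>{1..<m i}. rho_seq p k) * real p ^ M i \<le> 1"
    and lam: "av (l0 - 1) < 1"
    and zK: "z0 \<in> K_set av rhat (Q_lam av p a l0)"
    and itinerary: "\<forall>n. (itin m M n = 0 \<longrightarrow> av ((Q_lam av p a l0 ^^ n) z0) < 1)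
                       \<and> (itin m M n = 1 \<longrightarrow> av ((Q_lam av p a l0 ^^ n) z0 - 1) < 1)"
  shows "{z. av (z - z0) \<le> S_rad p} \<subseteq> K_set av rhat (Q_lam av p a l0)
     \<and> (filterlim M at_top sequentially \<longrightarrow>
          wandering_disc (Q_lam av p a l0) {z. av (z - z0) \<le> S_rad p}
        \<and> not_attracted av rhat (Q_lam av p a l0) {z. av (z - z0) \<le> S_rad p})"
proof -
  interpret itinerary_orbit av p l0 rhat a m M z0
    using Cp rhat HB Qsmall pos prodle lam itinerary
    by unfold_locales (auto simp: is_Cp_def)
  show ?thesis
    using disc_subset_K_set disc_wandering disc_not_attracted by blast
qed

end
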